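(* Let $p\ge1$, let $y_1,y_2\in\mathbb{R}^p$ with $d=\|y_1-y_2\|_2$ and $\bar y=\frac12(y_1+y_2)$. Let $\delta>0$ and $\lambda>0$, and let $\rho$ be the minimax concave penalty $$\rho(t)=\Bigl(t-\frac{t^2}{2\lambda\delta}\Bigr)I(t<\lambda\delta)+\frac{\lambda\delta}{2}I(t\ge\lambda\delta),\qquad t\ge 0.$$ If $\lambda\ge(1+\frac1\delta)\,d$, then the global minimizer over $(\theta_1,\theta_2)\in\mathbb{R}^p\times\mathbb{R}^p$ of $$\ell(\theta_1,\theta_2)=\|y_1-\theta_1\|_2^2+\|y_2-\theta_2\|_2^2+\lambda\rho(\|\theta_1-\theta_2\|_2)$$ is $(\hat\theta_1,\hat\theta_2)=(\bar y,\bar y)$.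
   Context: $I(\cdot)$ denotes the indicator function. *)

theory Defs
  imports "HOL-Analysis.Analysis"
begin

definition mcp :: "real \<Rightarrow> real \<Rightarrow> real \<Rightarrow> real" where
  "mcp del lam t =
     (if t < lam * del then t - t\<^sup>2 / (2 * lam * del) else 0)
     + (if t \<ge> lam * del then lam * del / 2 else 0)"

definition mcp_loss :: "real \<Rightarrow> real \<Rightarrow> real^'p \<Rightarrow> real^'p \<Rightarrow> real^'p \<Rightarrow> real^'p \<Rightarrow> real" where
  "mcp_loss del lam y1 y2 \<theta>1 \<theta>2 =
     (norm (y1 - \<theta>1))\<^sup>2 + (norm (y2 - \<theta>2))\<^sup>2 + lam * mcp del lam (norm (\<theta>1 - \<theta>2))"

end

theory Submission
  imports Defs
begin

text \<open>Write \<open>\<theta>1, \<theta>2\<close> in mean and difference coordinates: the squared residuals split into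
  \<open>2\<parallel>(y1 + y2)/2 - (\<theta>1 + \<theta>2)/2\<parallel>\<^sup>2 + \<parallel>(y1 - y2) - (\<theta>1 - \<theta>2)\<parallel>\<^sup>2/2\<close>, and the penalty only
  sees the difference. With \<open>d = \<parallel>y1 - y2\<parallel>\<close> and \<open>t = \<parallel>\<theta>1 - \<theta>2\<parallel>\<close>, the difference part is at least
  \<open>(d - t)\<^sup>2/2 + \<lambda>\<rho>(t)\<close> by the triangle inequality, and the condition \<open>\<lambda> \<ge> (1 + 1/\<delta>) d\<close>
  makes this scalar function strictly larger than its value \<open>d\<^sup>2/2\<close> at \<open>t = 0\<close> for every
  \<open>t > 0\<close>. Hence every minimizer has \<open>\<theta>1 = \<theta>2\<close>, and then the mean part forces both to be
  \<open>(y1 + y2)/2\<close>.\<close>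

lemma norm_diff_sq_add_mean_diff:
  fixes y1 y2 t1 t2 :: "'a::real_inner"
  shows "(norm (y1 - t1))\<^sup>2 + (norm (y2 - t2))\<^sup>2 =
    2 * (norm ((1/2) *\<^sub>R (y1 + y2) - (1/2) *\<^sub>R (t1 + t2)))\<^sup>2
    + (norm ((y1 - y2) - (t1 - t2)))\<^sup>2 / 2"
  unfolding power2_norm_eq_inner
  by (simp add: inner_simps inner_commute field_simps)

lemma mcp_0:
  assumes "del > 0" and "lam > 0"
  shows "mcp del lam 0 = 0"
  using mult_pos_pos[OF assms(2,1)] by (simp add: mcp_def)

lemma mcp_threshold_bounds:
  fixes del lam d :: real
  assumes del: "del > 0" and lam: "lam > 0" and d: "d \<ge> 0"
    and lam_ge: "lam \<ge> (1 + 1/del) * d"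
  shows "d < lam" and "2 * d \<le> lam * (del + 1)" and "d * d < lam * (lam * del)"
proof -
  have scaled: "(del + 1) * d \<le> lam * del"
    using lam_ge del by (simp add: field_simps)
  show less: "d < lam"
  proof (cases "d = 0")
    case False
    then have "d / del > 0" using d del by simp
    then show ?thesis using lam_ge by (simp add: algebra_simps)
  qed (use lam in simp)
  show "2 * d \<le> lam * (del + 1)"
  proof -
    have "0 \<le> del * d" using del d by simp
    then show ?thesis using scaled less by (simp add: distrib_left distrib_right)
  qed
  have "d \<le> (del + 1) * d"
    using del d by (simp add: mult_le_cancel_right1)
  then have "d \<le> lam * del"
    using scaled by linarith
  then have "d * d \<le> d * (lam * del)"
    using d by (rule mult_left_mono)
  also have "\<dots> < lam * (lam * del)"
    using less lam del by (simp add: mult_strict_right_mono)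
  finally show "d * d < lam * (lam * del)" .
qed

lemma mcp_fusion_gain:
  fixes del lam d t :: real
  assumes del: "del > 0" and lam: "lam > 0" and d: "d \<ge> 0"
    and lam_ge: "lam \<ge> (1 + 1/del) * d" and t: "t > 0"
  shows "d\<^sup>2 / 2 < (d - t)\<^sup>2 / 2 + lam * mcp del lam t"
proof -
  note bounds = mcp_threshold_bounds[OF del lam d lam_ge]
  have "0 < t\<^sup>2/2 - d*t + lam * mcp del lam t"
  proof (cases "t < lam * del")
    case True
    \<comment> \<open>On the concave branch the expression is \<open>t * g\<close> with \<open>g\<close> affine in \<open>t\<close>; \<open>g\<close> is
      positive at \<open>t = 0\<close> and nonnegative at the threshold \<open>t = \<lambda>\<delta>\<close>.\<close>
    define g where "g = lam - d + t * (del - 1) / (2 * del)"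
    have "0 < g"
    proof (cases "del \<ge> 1")
      case True
      then have "0 \<le> t * (del - 1) / (2 * del)" using t del by simp
      then show ?thesis using bounds(1) by (simp add: g_def)
    next
      case False
      have "lam * del * (del - 1) < t * (del - 1)"
        using False \<open>t < lam * del\<close> by (intro mult_strict_right_mono_neg) auto
      then have "lam * (del - 1) / 2 < t * (del - 1) / (2 * del)"
        using del by (simp add: field_simps)
      moreover have "0 \<le> lam - d + lam * (del - 1) / 2"
        using bounds(2) by (simp add: field_simps)
      ultimately show ?thesis unfolding g_def by linarith
    qed
    moreover have "t\<^sup>2/2 - d*t + lam * mcp del lam t = t * g"
      using True del lam by (simp add: mcp_def g_def field_simps power2_eq_square)
    ultimately show ?thesis using t by simp
  next
    case False
    then have "t\<^sup>2/2 - d*t + lam * mcp del lam t = (t - d)\<^sup>2/2 + (lam * (lam * del) - d * d)/2"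
      by (simp add: mcp_def power2_eq_square field_simps)
    moreover have "0 < (t - d)\<^sup>2 / 2 + (lam * (lam * del) - d * d) / 2"
      using bounds(3) by (intro add_nonneg_pos) auto
    ultimately show ?thesis by simp
  qed
  moreover have "(d - t)\<^sup>2 / 2 = d\<^sup>2 / 2 - d * t + t\<^sup>2 / 2"
    by (simp add: power2_diff field_simps)
  ultimately show ?thesis by linarith
qed

lemma mcp_diff_part_ge:
  fixes u v :: "'a::real_normed_vector"
  assumes del: "del > 0" and lam: "lam > 0" and lam_ge: "lam \<ge> (1 + 1/del) * norm u"
  shows "(norm u)\<^sup>2 / 2 \<le> (norm (u - v))\<^sup>2 / 2 + lam * mcp del lam (norm v)"
    and "v \<noteq> 0 \<Longrightarrow> (norm u)\<^sup>2 / 2 < (norm (u - v))\<^sup>2 / 2 + lam * mcp del lam (norm v)"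
proof -
  have "\<bar>norm u - norm v\<bar> \<le> norm (u - v)"
    by (rule norm_triangle_ineq3)
  then have triangle: "(norm u - norm v)\<^sup>2 \<le> (norm (u - v))\<^sup>2"
    by (metis abs_ge_zero power2_abs power_mono)
  show strict: "(norm u)\<^sup>2 / 2 < (norm (u - v))\<^sup>2 / 2 + lam * mcp del lam (norm v)" if "v \<noteq> 0"
    using mcp_fusion_gain[OF del lam norm_ge_zero lam_ge, of "norm v"] that triangle by simp
  show "(norm u)\<^sup>2 / 2 \<le> (norm (u - v))\<^sup>2 / 2 + lam * mcp del lam (norm v)"
    using strict mcp_0[OF del lam] by (cases "v = 0") auto
qed

lemma mcp_loss_mean_diff:
  fixes y1 y2 t1 t2 :: "real^'p"
  shows "mcp_loss del lam y1 y2 t1 t2 =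
    2 * (norm ((1/2) *\<^sub>R (y1 + y2) - (1/2) *\<^sub>R (t1 + t2)))\<^sup>2
    + ((norm ((y1 - y2) - (t1 - t2)))\<^sup>2 / 2 + lam * mcp del lam (norm (t1 - t2)))"
  unfolding mcp_loss_def norm_diff_sq_add_mean_diff by simp

lemma mcp_loss_midpoint:
  fixes y1 y2 :: "real^'p"
  assumes "del > 0" and "lam > 0"
  shows "mcp_loss del lam y1 y2 ((1/2) *\<^sub>R (y1 + y2)) ((1/2) *\<^sub>R (y1 + y2)) = (norm (y1 - y2))\<^sup>2 / 2"
  using mcp_0[OF assms] by (simp only: mcp_loss_mean_diff scaleR_half_double) simp

lemma mcp_loss_midpoint_le:
  fixes y1 y2 e1 e2 :: "real^'p"
  assumes del: "del > 0" and lam: "lam > 0" and lam_ge: "lam \<ge> (1 + 1/del) * norm (y1 - y2)"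
  shows "mcp_loss del lam y1 y2 ((1/2) *\<^sub>R (y1 + y2)) ((1/2) *\<^sub>R (y1 + y2)) \<le> mcp_loss del lam y1 y2 e1 e2"
  using mcp_loss_midpoint[OF del lam, of y1 y2] mcp_diff_part_ge(1)[OF assms, of "e1 - e2"]
    mcp_loss_mean_diff[of del lam y1 y2 e1 e2]
    zero_le_power2[of "norm ((1/2) *\<^sub>R (y1 + y2) - (1/2) *\<^sub>R (e1 + e2))"]
  by linarith

lemma mcp_loss_le_midpoint_imp_eq:
  fixes y1 y2 a b :: "real^'p"
  assumes del: "del > 0" and lam: "lam > 0" and lam_ge: "lam \<ge> (1 + 1/del) * norm (y1 - y2)"
    and min: "mcp_loss del lam y1 y2 a b \<le> mcp_loss del lam y1 y2 ((1/2) *\<^sub>R (y1 + y2)) ((1/2) *\<^sub>R (y1 + y2))"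
  shows "a = (1/2) *\<^sub>R (y1 + y2)" and "b = (1/2) *\<^sub>R (y1 + y2)"
proof -
  let ?m = "(1/2) *\<^sub>R (y1 + y2)"
  note diff_part = mcp_diff_part_ge[OF del lam lam_ge, of "a - b"]
  note loss = mcp_loss_mean_diff[of del lam y1 y2 a b]
  note mid = mcp_loss_midpoint[OF del lam, of y1 y2]
  have "a = b"
  proof (rule ccontr)
    assume "a \<noteq> b"
    then show False
      using diff_part(2) min mid loss zero_le_power2[of "norm (?m - (1/2) *\<^sub>R (a + b))"]
      by simp
  qed
  moreover have "(norm (?m - (1/2) *\<^sub>R (a + b)))\<^sup>2 \<le> 0"
    using diff_part(1) min mid loss by linarith
  ultimately show "a = ?m" and "b = ?m"
    by auto
qed

theorem lemma2:
  fixes y1 y2 :: "real^'p" and del lam :: real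
  assumes "del > 0" and "lam > 0"
    and "lam \<ge> (1 + 1 / del) * dist y1 y2"
  shows "{(\<theta>1, \<theta>2). \<forall>\<eta>1 \<eta>2. mcp_loss del lam y1 y2 \<theta>1 \<theta>2 \<le> mcp_loss del lam y1 y2 \<eta>1 \<eta>2}
         = {((1/2) *\<^sub>R (y1 + y2), (1/2) *\<^sub>R (y1 + y2))}"
  using mcp_loss_midpoint_le[OF assms[unfolded dist_norm]]
    mcp_loss_le_midpoint_imp_eq[OF assms[unfolded dist_norm]]
  by fastforce

end
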